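(* Let $K$ be a compact subset of $\mathbb R^d$, let $A\subset K$ be a Borel set, let $\mu\in\mathcal P(K)$ and $r>0$. Then $$\int_A\log\mu(B(x,2r))\,d\mu(x)\ge-\mu(A(r))\log\mathbf N_r(A)-e^{-1}.$$
   Context: $\mathcal P(K)$ is the set of Borel probability measures on $K$, $B(x,r)$ the open ball, $A(r)=\{x\in K:\operatorname{dist}(x,A)<r\}$, and $\mathbf N_r(A)$ the smallest number of balls of radius $r$ needed to cover $A$. *)

theory Defs
  imports "HOL-Probability.Probability"
begin

definition nbhd_in :: "'a::metric_space set \<Rightarrow> 'a set \<Rightarrow> real \<Rightarrow> 'a set" where
  "nbhd_in K A r = {x \<in> K. \<exists>a\<in>A. dist x a < r}"

text \<open>N_r(A): the smallest number of open balls of radius r (balls of the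
  metric space K, i.e. centred at points of K) needed to cover A.\<close>
definition covering_number :: "'a::metric_space set \<Rightarrow> 'a set \<Rightarrow> real \<Rightarrow> nat" where
  "covering_number K A r =
     (LEAST n. \<exists>C. C \<subseteq> K \<and> finite C \<and> card C = n \<and> A \<subseteq> (\<Union>c\<in>C. ball c r))"

end

theory Submission
  imports Defs
begin

text \<open>Cut A along a minimal r-cover by balls B(c_i, r) into the disjoint pieces
  A_i = A \<inter> B(c_i, r) - \<Union>_{j<i} B(c_j, r). Each piece has diameter < 2r, so
  \<mu>(B(x, 2r)) \<ge> p_i := \<mu>(A_i) on A_i, and the integral is at least \<Sum>_i p_i log p_i.
  Comparing with the uniform distribution on the N pieces (tangent line of
  t log t) gives \<Sum>_i p_i log p_i \<ge> \<mu>(A) log \<mu>(A) - \<mu>(A) log N, and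
  t log t \<ge> -1/e.\<close>

lemma x_ln_x_ge_neg_exp_neg1:
  fixes x :: real
  assumes "x \<ge> 0"
  shows "x * ln x \<ge> - exp (-1)"
proof (cases "x = 0")
  case False
  then have x: "x > 0" using assms by simp
  have "ln (1 / (exp 1 * x)) \<le> 1 / (exp 1 * x) - 1"
    by (rule ln_le_minus_one) (use x in simp)
  moreover have "ln (1 / (exp 1 * x)) = -1 - ln x"
    using x by (simp add: ln_div ln_mult)
  ultimately have "- ln x \<le> 1 / (exp 1 * x)" by simp
  then have "x * (- ln x) \<le> x * (1 / (exp 1 * x))"
    using x by (intro mult_left_mono) simp_all
  also have "\<dots> = exp (-1)" using x by (simp add: exp_minus field_simps)
  finally show ?thesis by simp
qed simp

lemma x_ln_x_ge_tangent:
  fixes p m :: real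
  assumes "p \<ge> 0" "m > 0"
  shows "p * ln p \<ge> p * ln m + p - m"
proof (cases "p = 0")
  case False
  then have p: "p > 0" using assms by simp
  have "p * ln (m / p) \<le> p * (m / p - 1)"
    using p assms by (intro mult_left_mono ln_le_minus_one) simp_all
  moreover have "ln (m / p) = ln m - ln p" using p assms by (simp add: ln_div)
  moreover have "p * (m / p - 1) = m - p" using p by (simp add: field_simps)
  ultimately show ?thesis by (simp add: algebra_simps)
qed (use assms in simp)

lemma sum_x_ln_x_ge:
  fixes p :: "'i \<Rightarrow> real"
  assumes "finite I" "\<And>i. i \<in> I \<Longrightarrow> p i \<ge> 0"
  shows "(\<Sum>i\<in>I. p i * ln (p i)) \<ge> - (\<Sum>i\<in>I. p i) * ln (card I) - exp (-1)"
proof -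
  define a where "a = (\<Sum>i\<in>I. p i)"
  have "a \<ge> 0" unfolding a_def using assms by (simp add: sum_nonneg)
  show ?thesis
  proof (cases "a = 0")
    case True
    then have "\<forall>i\<in>I. p i = 0" using assms unfolding a_def by (simp add: sum_nonneg_eq_0_iff)
    then show ?thesis using True by (simp add: a_def)
  next
    case False
    with \<open>a \<ge> 0\<close> have a: "a > 0" by simp
    then have card: "card I > 0" using assms(1) unfolding a_def by (auto simp: card_gt_0_iff)
    define m where "m = a / card I"
    have "m > 0" using a card by (simp add: m_def)
    have "(\<Sum>i\<in>I. p i * ln (p i)) \<ge> (\<Sum>i\<in>I. p i * ln m + p i - m)"
      by (rule sum_mono) (use x_ln_x_ge_tangent assms(2) \<open>m > 0\<close> in auto)
    also have "(\<Sum>i\<in>I. p i * ln m + p i - m) = a * ln m"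
      using card by (simp add: sum.distrib sum_subtractf sum_distrib_right a_def m_def)
    also have "\<dots> = a * ln a - a * ln (card I)"
      using a card by (simp add: m_def ln_div right_diff_distrib)
    finally show ?thesis
      using x_ln_x_ge_neg_exp_neg1[OF \<open>a \<ge> 0\<close>] unfolding a_def by linarith
  qed
qed

lemma borel_measurable_measure_ball:
  fixes M :: "'a::{metric_space, second_countable_topology} measure"
  assumes sets_M: "sets M = sets (restrict_space borel K)" and "finite_measure M"
  shows "(\<lambda>x. measure M (ball x \<rho> \<inter> K)) \<in> borel_measurable M"
proof -
  interpret finite_measure M by fact
  have space_M: "space M = K"
    using sets_eq_imp_space_eq[OF sets_M] by (simp add: space_restrict_space)
  have "(\<lambda>x. x) \<in> measurable (restrict_space borel K) borel"
    by (rule measurable_restrict_space1) simp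
  then have "(\<lambda>x. x) \<in> measurable M borel"
    by (subst measurable_cong_sets[OF sets_M refl])
  then have "{z \<in> space (M \<Otimes>\<^sub>M M). dist (fst z) (snd z) < \<rho>} \<in> sets (M \<Otimes>\<^sub>M M)"
    by measurable
  then have "(\<lambda>x. measure M (Pair x -` {z \<in> space (M \<Otimes>\<^sub>M M). dist (fst z) (snd z) < \<rho>}))
      \<in> borel_measurable M"
    unfolding measure_def by (intro borel_measurable_enn2real measurable_emeasure_Pair)
  moreover have "Pair x -` {z \<in> space (M \<Otimes>\<^sub>M M). dist (fst z) (snd z) < \<rho>} = ball x \<rho> \<inter> K"
    if "x \<in> space M" for x
    using that space_M by (auto simp: space_pair_measure)
  ultimately show ?thesis by (simp cong: measurable_cong)
qed

lemma covering_number_attained: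
  fixes K A :: "'a::metric_space set"
  assumes "compact K" "A \<subseteq> K" "r > 0"
  obtains C where "C \<subseteq> K" "finite C" "card C = covering_number K A r"
    "A \<subseteq> (\<Union>c\<in>C. ball c r)"
proof -
  obtain D where "D \<subseteq> K" "finite D" "K \<subseteq> (\<Union>c\<in>D. ball c r)"
    using compactE_image[OF assms(1), of K "\<lambda>c. ball c r"] assms(3) by force
  then have "\<exists>n C. C \<subseteq> K \<and> finite C \<and> card C = n \<and> A \<subseteq> (\<Union>c\<in>C. ball c r)"
    using assms(2) by blast
  from LeastI_ex[OF this] show ?thesis
    using that unfolding covering_number_def by blast
qed

lemma nbhd_in_borel:
  assumes "K \<in> sets borel"
  shows "nbhd_in K A r \<in> sets borel"
proof -
  have "nbhd_in K A r = K \<inter> (\<Union>a\<in>A. ball a r)"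
    unfolding nbhd_in_def by (auto simp: dist_commute)
  moreover have "open (\<Union>a\<in>A. ball a r)" by auto
  ultimately show ?thesis using assms by (simp add: sets.Int borel_open)
qed

lemma subset_nbhd_in: "A \<subseteq> K \<Longrightarrow> r > 0 \<Longrightarrow> A \<subseteq> nbhd_in K A r"
  unfolding nbhd_in_def by force

lemma (in finite_measure) set_integral_ln_ge_x_ln_x:
  assumes P: "P \<in> sets M" and f: "f \<in> borel_measurable M"
    and bounds: "\<And>x. x \<in> P \<Longrightarrow> measure M P \<le> f x \<and> f x \<le> 1"
  shows "set_integrable M P (\<lambda>x. ln (f x))
    \<and> measure M P * ln (measure M P) \<le> (LINT x:P|M. ln (f x))"
proof (cases "measure M P = 0")
  case True
  then have "P \<in> null_sets M" using P by (simp add: null_sets_def emeasure_eq_measure)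
  then have "AE x in M. x \<notin> P" by (rule AE_not_in)
  then have ae: "AE x in M. indicator P x *\<^sub>R ln (f x) = 0" by eventually_elim simp
  have "(\<lambda>x. indicator P x *\<^sub>R ln (f x)) \<in> borel_measurable M"
    using P f by measurable
  then have "has_bochner_integral M (\<lambda>x. indicator P x *\<^sub>R ln (f x)) 0"
    using has_bochner_integral_cong_AE[OF _ borel_measurable_const ae] by blast
  then have "integrable M (\<lambda>x. indicator P x *\<^sub>R ln (f x))
      \<and> integral\<^sup>L M (\<lambda>x. indicator P x *\<^sub>R ln (f x)) = 0"
    by (simp only: has_bochner_integral_iff)
  then show ?thesis
    using True unfolding set_integrable_def set_lebesgue_integral_def by simp
next
  case False
  then have "measure M P > 0" by (simp add: order_le_neq_trans)
  then have ln_bounds: "ln (measure M P) \<le> ln (f x) \<and> ln (f x) \<le> 0" if "x \<in> P" for x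
    using bounds[OF that] by simp
  have int: "set_integrable M P (\<lambda>x. ln (f x))"
    unfolding set_integrable_def
  proof (rule integrable_const_bound[where B = "\<bar>ln (measure M P)\<bar>"])
    show "AE x in M. norm (indicator P x *\<^sub>R ln (f x)) \<le> \<bar>ln (measure M P)\<bar>"
    proof (rule AE_I2)
      show "norm (indicator P x *\<^sub>R ln (f x)) \<le> \<bar>ln (measure M P)\<bar>" for x
        using ln_bounds[of x] by (cases "x \<in> P") auto
    qed
  qed (use P f in measurable)
  have "measure M P * ln (measure M P) = (LINT x:P|M. ln (measure M P))"
    using P by (simp add: set_integral_const emeasure_eq_measure)
  also have "\<dots> \<le> (LINT x:P|M. ln (f x))"
    using P ln_bounds int
    by (intro set_integral_mono) (auto simp: set_integrable_def emeasure_eq_measure)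
  finally show ?thesis using int by simp
qed

lemma (in finite_measure) set_integral_ln_ge_sum_x_ln_x:
  assumes "finite I" "disjoint_family_on P I" "\<And>i. i \<in> I \<Longrightarrow> P i \<in> sets M"
    and "f \<in> borel_measurable M"
    and "\<And>i x. i \<in> I \<Longrightarrow> x \<in> P i \<Longrightarrow> measure M (P i) \<le> f x \<and> f x \<le> 1"
  shows "set_integrable M (\<Union>i\<in>I. P i) (\<lambda>x. ln (f x))
    \<and> (\<Sum>i\<in>I. measure M (P i) * ln (measure M (P i))) \<le> (LINT x:(\<Union>i\<in>I. P i)|M. ln (f x))"
proof -
  have pieces: "set_integrable M (P i) (\<lambda>x. ln (f x))
      \<and> measure M (P i) * ln (measure M (P i)) \<le> (LINT x:P i|M. ln (f x))" if "i \<in> I" for i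
    using assms that by (intro set_integral_ln_ge_x_ln_x) auto
  have "(\<Sum>i\<in>I. measure M (P i) * ln (measure M (P i))) \<le> (\<Sum>i\<in>I. LINT x:P i|M. ln (f x))"
    using pieces by (intro sum_mono) auto
  also have "\<dots> = (LINT x:(\<Union>i\<in>I. P i)|M. ln (f x))"
    using assms pieces by (intro set_integral_finite_Union[symmetric]) auto
  finally show ?thesis
    using assms pieces by (auto intro!: set_integrable_UN)
qed

lemma ball_cover_partition:
  fixes A :: "'a::metric_space set"
  assumes "finite C" "A \<subseteq> (\<Union>c\<in>C. ball c r)" "A \<in> sets borel"
  obtains P :: "nat \<Rightarrow> 'a set" where "disjoint_family_on P {0..<card C}"
    "A = (\<Union>i\<in>{0..<card C}. P i)" "\<And>i. P i \<in> sets borel"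
    "\<And>i x y. x \<in> P i \<Longrightarrow> y \<in> P i \<Longrightarrow> dist x y < 2*r"
proof -
  obtain c where c: "bij_betw c {0..<card C} C" using ex_bij_betw_nat_finite[OF assms(1)] by blast
  have "A \<subseteq> (\<Union>i\<in>{0..<card C}. ball (c i) r)"
  proof
    fix x assume "x \<in> A"
    then obtain d where "d \<in> C" "x \<in> ball d r" using assms(2) by blast
    moreover obtain i where "i \<in> {0..<card C}" "d = c i"
      using bij_betw_imp_surj_on[OF c] \<open>d \<in> C\<close> by blast
    ultimately show "x \<in> (\<Union>i\<in>{0..<card C}. ball (c i) r)" by blast
  qed
  then have "A = (\<Union>i\<in>{0..<card C}. A \<inter> ball (c i) r)" by blast
  define P where "P = disjointed (\<lambda>i. A \<inter> ball (c i) r)"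
  have P_sub: "P i \<subseteq> A \<inter> ball (c i) r" for i unfolding P_def by (rule disjointed_subset)
  show ?thesis
  proof
    show "disjoint_family_on P {0..<card C}"
      unfolding P_def by (rule disjoint_family_on_mono[OF subset_UNIV disjoint_family_disjointed])
    show "A = (\<Union>i\<in>{0..<card C}. P i)" unfolding P_def finite_UN_disjointed_eq by fact
    show "P i \<in> sets borel" for i
    proof -
      have "range (\<lambda>i. A \<inter> ball (c i) r) \<subseteq> sets borel" using assms(3) by auto
      then show ?thesis unfolding P_def using sets.range_disjointed_sets by blast
    qed
    show "dist x y < 2*r" if "x \<in> P i" "y \<in> P i" for i x y
    proof -
      have "dist x (c i) < r" "dist y (c i) < r" using that P_sub[of i] by (auto simp: dist_commute)
      then show ?thesis using dist_triangle_less_add by fastforce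
    qed
  qed
qed

lemma set_integral_ln_measure_ball_ge_sum_x_ln_x:
  fixes M :: "'a::{metric_space, second_countable_topology} measure"
  assumes "prob_space M" and sets_M: "sets M = sets (restrict_space borel K)"
    and "finite I" "disjoint_family_on P I" "\<And>i. i \<in> I \<Longrightarrow> P i \<in> sets M"
    and diam: "\<And>i x y. i \<in> I \<Longrightarrow> x \<in> P i \<Longrightarrow> y \<in> P i \<Longrightarrow> dist x y < \<rho>"
  shows "set_integrable M (\<Union>i\<in>I. P i) (\<lambda>x. ln (measure M (ball x \<rho> \<inter> K)))
    \<and> (\<Sum>i\<in>I. measure M (P i) * ln (measure M (P i)))
        \<le> (LINT x:(\<Union>i\<in>I. P i)|M. ln (measure M (ball x \<rho> \<inter> K)))"
proof -
  interpret prob_space M by fact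
  have "space M = K"
    using sets_eq_imp_space_eq[OF sets_M] by (simp add: space_restrict_space)
  have "K \<inter> ball x \<rho> \<in> sets M" for x
    unfolding sets_M sets_restrict_space by (rule imageI) simp
  then have "ball x \<rho> \<inter> K \<in> sets M" for x by (simp add: Int_commute)
  moreover have "P i \<subseteq> ball x \<rho> \<inter> K" if "i \<in> I" "x \<in> P i" for i x
    using that diam sets.sets_into_space[OF assms(5)] \<open>space M = K\<close> by (auto simp: dist_commute)
  ultimately have "measure M (P i) \<le> measure M (ball x \<rho> \<inter> K)" if "i \<in> I" "x \<in> P i" for i x
    using that assms(5) by (intro finite_measure_mono) auto
  then show ?thesis
    using assms(3-5) sets_M
    by (intro set_integral_ln_ge_sum_x_ln_x borel_measurable_measure_ball) (auto intro: finite_measure)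
qed

theorem lemma6p1:
  fixes K A :: "'a::euclidean_space set" and M :: "'a measure" and r :: real
  assumes "compact K"
    and "A \<in> sets borel" and "A \<subseteq> K"
    and "sets M = sets (restrict_space borel K)" and "prob_space M"
    and "r > 0"
  shows "set_integrable M A (\<lambda>x. ln (measure M (ball x (2*r) \<inter> K)))
    \<and> (LINT x:A|M. ln (measure M (ball x (2*r) \<inter> K)))
        \<ge> - measure M (nbhd_in K A r) * ln (real (covering_number K A r)) - exp (-1)"
proof -
  interpret prob_space M by fact
  have "K \<in> sets borel" using assms(1) by (simp add: borel_closed compact_imp_closed)
  then have sets_M: "S \<in> sets M \<longleftrightarrow> S \<subseteq> K \<and> S \<in> sets borel" for S
    using assms(4) sets_restrict_space_iff[of K borel S] by auto
  obtain C where C: "finite C" "card C = covering_number K A r" "A \<subseteq> (\<Union>c\<in>C. ball c r)"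
    using covering_number_attained[OF assms(1,3,6)] by metis
  then obtain P where P: "disjoint_family_on P {0..<card C}" "A = (\<Union>i\<in>{0..<card C}. P i)"
    "\<And>i. P i \<in> sets borel" "\<And>i x y. x \<in> P i \<Longrightarrow> y \<in> P i \<Longrightarrow> dist x y < 2*r"
    using ball_cover_partition assms(2) by metis
  have "P i \<subseteq> A" if "i \<in> {0..<card C}" for i
    unfolding P(2) using that by auto
  then have P_sets: "P i \<in> sets M" if "i \<in> {0..<card C}" for i
    using P(3) that assms(3) by (auto simp: sets_M)
  have int: "set_integrable M A (\<lambda>x. ln (measure M (ball x (2*r) \<inter> K)))
      \<and> (\<Sum>i\<in>{0..<card C}. measure M (P i) * ln (measure M (P i)))
          \<le> (LINT x:A|M. ln (measure M (ball x (2*r) \<inter> K)))"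
    unfolding P(2) using assms(4,5) P(1,4) P_sets
    by (intro set_integral_ln_measure_ball_ge_sum_x_ln_x) auto
  have "measure M A = (\<Sum>i\<in>{0..<card C}. measure M (P i))"
    unfolding P(2) using P(1) P_sets by (intro measure_finite_Union) (auto simp: emeasure_eq_measure)
  moreover have "nbhd_in K A r \<in> sets M"
    using \<open>K \<in> sets borel\<close> by (simp add: sets_M nbhd_in_borel) (auto simp: nbhd_in_def)
  then have "measure M A \<le> measure M (nbhd_in K A r)"
    using assms(3,6) by (intro finite_measure_mono subset_nbhd_in)
  moreover have "ln (card C) \<ge> 0" by (cases "card C = 0") auto
  ultimately have "(\<Sum>i\<in>{0..<card C}. measure M (P i)) * ln (card C)
      \<le> measure M (nbhd_in K A r) * ln (card C)"
    by (intro mult_right_mono) simp_all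
  then show ?thesis
    using int C(2) sum_x_ln_x_ge[of "{0..<card C}" "\<lambda>i. measure M (P i)"] by simp
qed

end
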